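(* There exists a constant $c>0$ and infinitely many pairs of integers $(n,\ell)$ with $1\le\ell<n$ such that $f(n,\ell)\ge c\,\frac{n}{\ell}\,\frac{\log n}{\log\log n}$. (For instance, one may take $n$ to be the product of the $k$ smallest primes and $\ell$ the smallest integer with $\pi(\ell)=k$.)
   Context: For integers $n\ge 2$ and $\ell\ge0$, a set $B\subseteq\mathbb{Z}_n$ is an $\ell$-covering set if $\{ab\bmod n: 0\le a\le\ell,\ b\in B\}=\mathbb{Z}_n$, and $f(n,\ell)$ is the minimum size of an $\ell$-covering set of $\mathbb{Z}_n$. $\pi$ is the prime counting function. Convention: $\log x$ denotes $\max(\ln x,1)$. *)

theory Defs
  imports Complex_Main
begin

definition covering_set :: "nat \<Rightarrow> nat \<Rightarrow> nat set \<Rightarrow> bool" where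
  "covering_set n l B \<longleftrightarrow> B \<subseteq> {0..<n} \<and>
     {(a * b) mod n | a b. a \<le> l \<and> b \<in> B} = {0..<n}"

definition fcov :: "nat \<Rightarrow> nat \<Rightarrow> nat" where
  "fcov n l = (LEAST k. \<exists>B. covering_set n l B \<and> card B = k)"

definition Log :: "real \<Rightarrow> real" where
  "Log x = max (ln x) 1"

end

theory Submission
  imports Defs "HOL-Number_Theory.Totient"
begin

text \<open>Take \<open>n\<close> the product of the primes up to a prime \<open>N\<close>, and \<open>l = N\<close>. A number
  \<open>a \<le> N\<close> coprime to \<open>n\<close> must be \<open>1\<close>, so every unit of \<open>\<int>/n\<close> lies in each
  \<open>N\<close>-covering set and \<open>f(n, N) \<ge> \<phi>(n) = n \<Prod>\<^bsub>p \<le> N\<^esub> (1 - 1/p)\<close>.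
  Chebyshev's bound \<open>\<Prod>\<^bsub>p \<le> N\<^esub> p \<le> 4\<^sup>N\<close> gives \<open>log n \<le> N log 4\<close>, hence
  \<open>log n / log log n = O(N / log N)\<close>; a Mertens-type bound
  \<open>\<Sum>\<^bsub>p \<le> N\<^esub> 1/p \<le> log log N + O(1)\<close> gives \<open>\<Prod>\<^bsub>p \<le> N\<^esub> (1 - 1/p) \<ge> c / log N\<close>.\<close>

section \<open>Chebyshev's bound for the primorial\<close>

definition primes_le :: "nat \<Rightarrow> nat set" where
  "primes_le N = {p. prime p \<and> p \<le> N}"

definition primorial :: "nat \<Rightarrow> nat" where
  "primorial N = \<Prod>(primes_le N)"

lemma finite_primes_le [simp]: "finite (primes_le N)"
  unfolding primes_le_def by (rule finite_subset[of _ "{..N}"]) auto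

lemma primes_le_less_2: "N < 2 \<Longrightarrow> primes_le N = {}"
  unfolding primes_le_def by (auto dest: prime_ge_2_nat)

lemma primes_le_2: "primes_le 2 = {2}"
  unfolding primes_le_def using prime_ge_2_nat by (auto simp: le_antisym)

lemma primes_le_Suc:
  "primes_le (Suc N) = (if prime (Suc N) then insert (Suc N) (primes_le N) else primes_le N)"
  unfolding primes_le_def by (auto simp: le_Suc_eq)

lemma sum_primes_le_Suc:
  "(\<Sum>p\<in>primes_le (Suc N). f p) = (\<Sum>p\<in>primes_le N. f p) + (if prime (Suc N) then f (Suc N) else 0)"
proof -
  have "Suc N \<notin> primes_le N" unfolding primes_le_def by auto
  then show ?thesis by (simp add: primes_le_Suc add.commute)
qed

lemma primorial_pos: "primorial N > 0"
  unfolding primorial_def primes_le_def using prime_gt_0_nat by (auto intro!: prod_pos)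

lemma prod_primes_dvd:
  fixes c :: nat
  assumes "finite Q" "\<And>p. p \<in> Q \<Longrightarrow> prime p \<and> p dvd c"
  shows "\<Prod>Q dvd c"
  using assms
proof (induction Q rule: finite_induct)
  case empty then show ?case by simp
next
  case (insert x F)
  have "\<not> x dvd \<Prod>F"
  proof
    assume "x dvd \<Prod>F"
    then obtain y where "y \<in> F" "x dvd y"
      using insert prime_dvd_prod_iff[of F x "\<lambda>y. y"] by auto
    then show False using insert by (metis insertCI primes_dvd_imp_eq)
  qed
  then have "coprime x (\<Prod>F)" using insert by (simp add: prime_imp_coprime)
  then show ?case using insert by (simp add: divides_mult)
qed

lemma binomial_odd_le_4_pow: "(2*m+1) choose m \<le> 4^m"
proof -
  have "((2*m+1) choose m) + ((2*m+1) choose (m+1)) = (\<Sum>k\<in>{m,m+1}. (2*m+1) choose k)" by simp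
  also have "\<dots> \<le> (\<Sum>k\<le>2*m+1. (2*m+1) choose k)" by (rule sum_mono2) auto
  also have "\<dots> = 2^(2*m+1)" by (rule choose_row_sum)
  finally have "((2*m+1) choose m) + ((2*m+1) choose (m+1)) \<le> 2^(2*m+1)" .
  moreover have "(2*m+1) choose (m+1) = (2*m+1) choose m"
    using central_binomial_odd[of "2*m+1"] by simp
  ultimately show ?thesis by (simp add: power_mult)
qed

text \<open>Every prime in \<open>(m+1, 2m+1]\<close> divides the numerator \<open>(2m+1)!\<close> but not the denominator \<open>m! (m+1)!\<close>.\<close>
lemma prod_primes_between_dvd_binomial:
  "\<Prod>{p. prime p \<and> m+1 < p \<and> p \<le> 2*m+1} dvd (2*m+1) choose m"
proof (rule prod_primes_dvd)
  show "finite {p. prime p \<and> m+1 < p \<and> p \<le> 2*m+1}" by simp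
  fix p assume "p \<in> {p. prime p \<and> m+1 < p \<and> p \<le> 2*m+1}"
  then have p: "prime p" "m+1 < p" "p \<le> 2*m+1" by auto
  have "fact m * fact (m+1) * ((2*m+1) choose m) = (fact (2*m+1) :: nat)"
    using binomial_fact_lemma[of m "2*m+1"] by simp
  moreover have "p dvd (fact (2*m+1) :: nat)"
    using p prime_dvd_fact_iff[of p "2*m+1"] by blast
  ultimately have "p dvd fact m * fact (m+1) * ((2*m+1) choose m)"
    by (simp only:)
  moreover have "\<not> p dvd (fact m :: nat)" "\<not> p dvd (fact (m+1) :: nat)"
    using p prime_dvd_fact_iff[of p m] prime_dvd_fact_iff[of p "m+1"] by auto
  ultimately show "prime p \<and> p dvd (2*m+1) choose m"
    using p by (simp only: prime_dvd_mult_iff[OF p(1)]) simp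
qed

lemma primorial_le_4_pow: "primorial N \<le> 4^N"
proof (induction N rule: less_induct)
  case (less N)
  show ?case
  proof (cases "N \<le> 2")
    case True
    then consider "N < 2" | "N = 2" by linarith
    then show ?thesis
      by cases (simp_all add: primorial_def primes_le_less_2 primes_le_2)
  next
    case large: False
    show ?thesis
    proof (cases "prime N")
      case False
      then obtain M where M: "N = Suc M" "primes_le N = primes_le M"
        using large by (cases N) (auto simp: primes_le_Suc)
      then have "primorial N \<le> 4^M" using less.IH by (simp add: primorial_def)
      also have "\<dots> \<le> 4^N" using M by simp
      finally show ?thesis .
    next
      case True
      then have "odd N" using large prime_odd_nat by auto
      then obtain m where m: "N = 2*m+1" by (rule oddE)
      define Q where "Q = {p. prime p \<and> m+1 < p \<and> p \<le> 2*m+1}"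
      have "primes_le N = primes_le (m+1) \<union> Q" "primes_le (m+1) \<inter> Q = {}"
        unfolding primes_le_def Q_def m by auto
      then have "primorial N = primorial (m+1) * \<Prod>Q"
        unfolding primorial_def Q_def by (simp add: prod.union_disjoint)
      also have "\<dots> \<le> 4^(m+1) * 4^m"
      proof (rule mult_le_mono)
        show "primorial (m+1) \<le> 4^(m+1)" using less.IH[of "m+1"] m large by simp
        have "\<Prod>Q \<le> (2*m+1) choose m"
          using prod_primes_between_dvd_binomial[of m] unfolding Q_def by (rule dvd_imp_le) simp
        then show "\<Prod>Q \<le> 4^m" using binomial_odd_le_4_pow[of m] by simp
      qed
      also have "\<dots> = 4^N" using m by (simp add: power_add[symmetric])
      finally show ?thesis .
    qed
  qed
qed

lemma ln_primorial: "ln (real (primorial N)) = (\<Sum>p\<in>primes_le N. ln (real p))"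
  unfolding primorial_def primes_le_def using prime_gt_0_nat
  by (subst of_nat_prod, subst ln_prod) auto

lemma sum_ln_primes_le: "(\<Sum>p\<in>primes_le N. ln (real p)) \<le> real N * ln 4"
proof -
  have "real (primorial N) \<le> 4 ^ N"
    using primorial_le_4_pow[of N] by (metis of_nat_le_iff of_nat_numeral of_nat_power)
  then have "ln (real (primorial N)) \<le> ln (4 ^ N)"
    using primorial_pos[of N] by (intro ln_mono) simp_all
  then show ?thesis by (simp add: ln_primorial ln_realpow)
qed

section \<open>Mertens-type estimates\<close>

lemma card_multiples_ge:
  assumes "p > 0"
  shows "N div p \<le> card {m\<in>{1..N}. p dvd m}"
proof -
  have "(\<lambda>k. p*k) ` {1..N div p} \<subseteq> {m\<in>{1..N}. p dvd m}"
  proof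
    fix x assume "x \<in> (\<lambda>k. p*k) ` {1..N div p}"
    then obtain k where k: "k \<in> {1..N div p}" "x = p*k" by blast
    then have "p*k \<le> p * (N div p)" by simp
    also have "\<dots> \<le> N" by simp
    finally show "x \<in> {m\<in>{1..N}. p dvd m}" using k assms by simp
  qed
  then have "card ((\<lambda>k. p*k) ` {1..N div p}) \<le> card {m\<in>{1..N}. p dvd m}"
    by (intro card_mono) simp_all
  moreover have "card ((\<lambda>k. p*k) ` {1..N div p}) = N div p"
    using assms by (subst card_image) (auto simp: inj_on_def)
  ultimately show ?thesis by simp
qed

lemma sum_ln_prime_factors_le:
  assumes "m > 0"
  shows "(\<Sum>p\<in>prime_factors m. ln (real p)) \<le> ln (real m)"
proof -
  have "\<Prod>(prime_factors m) dvd m" by (rule prod_primes_dvd) auto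
  then have "\<Prod>(prime_factors m) \<le> m" using assms by (rule dvd_imp_le)
  moreover have "(\<Sum>p\<in>prime_factors m. ln (real p)) = ln (real (\<Prod>(prime_factors m)))"
    using prime_gt_0_nat by (subst of_nat_prod, subst ln_prod) auto
  moreover have "\<Prod>(prime_factors m) > 0" using prime_gt_0_nat by (intro prod_pos) auto
  ultimately show ?thesis by (metis ln_mono of_nat_0_less_iff of_nat_mono)
qed

text \<open>Counting the pairs \<open>(p, m)\<close> with \<open>p \<le> N\<close> prime and \<open>p dvd m \<le> N\<close> in two ways.\<close>
lemma sum_div_mult_ln_primes_le:
  "(\<Sum>p\<in>primes_le N. real (N div p) * ln (real p)) \<le> real N * ln (real N)"
proof -
  have "(\<Sum>p\<in>primes_le N. real (N div p) * ln (real p)) \<le>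
        (\<Sum>p\<in>primes_le N. real (card {m\<in>{1..N}. p dvd m}) * ln (real p))"
    using card_multiples_ge prime_gt_0_nat
    by (intro sum_mono mult_right_mono) (auto simp: primes_le_def Suc_le_eq)
  also have "\<dots> = (\<Sum>p\<in>primes_le N. \<Sum>m\<in>{m\<in>{1..N}. p dvd m}. ln (real p))"
    by simp
  also have "\<dots> = (\<Sum>m\<in>{1..N}. \<Sum>p\<in>{p\<in>primes_le N. p dvd m}. ln (real p))"
    by (rule sum.swap_restrict) simp_all
  also have "\<dots> \<le> (\<Sum>m\<in>{1..N}. ln (real N))"
  proof (intro sum_mono)
    fix m assume m: "m \<in> {1..N}"
    have "(\<Sum>p\<in>{p\<in>primes_le N. p dvd m}. ln (real p)) \<le> (\<Sum>p\<in>prime_factors m. ln (real p))"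
      using m prime_gt_0_nat
      by (intro sum_mono2) (auto simp: primes_le_def prime_factors_dvd)
    also have "\<dots> \<le> ln (real m)" using m by (intro sum_ln_prime_factors_le) auto
    also have "\<dots> \<le> ln (real N)" using m by simp
    finally show "(\<Sum>p\<in>{p\<in>primes_le N. p dvd m}. ln (real p)) \<le> ln (real N)" .
  qed
  finally show ?thesis by simp
qed

lemma sum_ln_prime_div_prime_le:
  assumes "N \<ge> 1"
  shows "(\<Sum>p\<in>primes_le N. ln (real p) / real p) \<le> ln (real N) + ln 4"
proof -
  have "(\<Sum>p\<in>primes_le N. (real N / real p - 1) * ln (real p))
          \<le> (\<Sum>p\<in>primes_le N. real (N div p) * ln (real p))"
  proof (intro sum_mono mult_right_mono)
    fix p assume "p \<in> primes_le N"
    then have p: "p > 0" by (simp add: primes_le_def prime_gt_0_nat)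
    have "N < p * (N div p + 1)" using dividend_less_times_div[OF p] by simp
    then have "real N < real p * (real (N div p) + 1)"
      by (metis of_nat_1 of_nat_add of_nat_less_iff of_nat_mult)
    then show "real N / real p - 1 \<le> real (N div p)"
      using p by (simp add: field_simps)
    show "0 \<le> ln (real p)" using p by simp
  qed
  also have "\<dots> \<le> real N * ln (real N)" by (rule sum_div_mult_ln_primes_le)
  finally have "real N * (\<Sum>p\<in>primes_le N. ln (real p) / real p) - (\<Sum>p\<in>primes_le N. ln (real p))
      \<le> real N * ln (real N)"
    by (simp add: sum_subtractf sum_distrib_left algebra_simps)
  then have "real N * (\<Sum>p\<in>primes_le N. ln (real p) / real p) \<le> real N * (ln (real N) + ln 4)"
    using sum_ln_primes_le[of N] by (simp add: algebra_simps)
  then show ?thesis using assms by simp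
qed

lemma ln_4: "ln (4::real) = 2 * ln 2"
  using ln_realpow[of 2 2] by simp

lemma ln_4_ge_1: "ln (4::real) \<ge> 1"
  using exp_le by (subst ln_ge_iff) auto

lemma inverse_diff_le_ln_diff:
  fixes a b s :: real
  assumes "0 < a" "a \<le> b" "s \<le> a"
  shows "s * (1/a - 1/b) \<le> ln b - ln a"
proof -
  have "1/a - 1/b \<ge> 0" using assms by (simp add: frac_le)
  with assms(3) have "s * (1/a - 1/b) \<le> a * (1/a - 1/b)" by (rule mult_right_mono)
  also have "\<dots> = 1 - a/b" using assms by (simp add: field_simps)
  also have "\<dots> \<le> - ln (a/b)" using ln_le_minus_one[of "a/b"] assms by simp
  also have "\<dots> = ln b - ln a" using assms by (simp add: ln_div)
  finally show ?thesis .
qed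

text \<open>Discrete partial summation: a new prime \<open>p = N + 1\<close> raises \<open>\<Sum>1/p\<close> and
  \<open>(\<Sum>ln p/p) / ln (N + 1)\<close> by the same amount, and the bound \<open>\<Sum>ln p/p \<le> ln N + ln 4\<close>
  makes the remaining change, through \<open>1/ln N\<close> and \<open>ln (ln N)\<close>, nonpositive.\<close>
definition mertens_potential :: "nat \<Rightarrow> real" where
  "mertens_potential N = (\<Sum>p\<in>primes_le N. 1 / real p)
     - ((\<Sum>p\<in>primes_le N. ln (real p) / real p) - ln 4) / ln (real N) - ln (ln (real N))"

lemma mertens_potential_Suc_le:
  assumes "N \<ge> 2"
  shows "mertens_potential (Suc N) \<le> mertens_potential N"
proof -
  define L0 L1 where "L0 = ln (real N)" and "L1 = ln (real (Suc N))"
  define S where "S = (\<Sum>p\<in>primes_le N. ln (real p) / real p)"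
  have L: "0 < L0" "L0 \<le> L1" using assms unfolding L0_def L1_def by simp_all
  have "ln (real (Suc N)) \<noteq> 0" using assms by simp
  have "(\<Sum>p\<in>primes_le (Suc N). 1 / real p)
          - (\<Sum>p\<in>primes_le (Suc N). ln (real p) / real p) / L1
        = (\<Sum>p\<in>primes_le N. 1 / real p) - S / L1"
    using \<open>ln (real (Suc N)) \<noteq> 0\<close> unfolding sum_primes_le_Suc S_def L1_def
    by (simp add: diff_divide_distrib add_divide_distrib)
  then have "mertens_potential (Suc N) - mertens_potential N
               = (S - ln 4) * (1/L0 - 1/L1) - (ln L1 - ln L0)"
    unfolding mertens_potential_def L0_def[symmetric] L1_def[symmetric] S_def[symmetric]
    by (simp add: algebra_simps diff_divide_distrib)
  also have "\<dots> \<le> 0"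
    using inverse_diff_le_ln_diff[OF L] sum_ln_prime_div_prime_le[of N] assms
    unfolding S_def L0_def by simp
  finally show ?thesis by simp
qed

lemma mertens_potential_2: "mertens_potential 2 = 2 - ln (ln 2)"
  by (simp add: mertens_potential_def primes_le_2 ln_4 field_simps)

lemma sum_inverse_primes_le:
  assumes "N \<ge> 2"
  shows "(\<Sum>p\<in>primes_le N. 1 / real p) \<le> ln (ln (real N)) + 3 - ln (ln 2)"
proof -
  have "mertens_potential N \<le> mertens_potential 2"
    using assms by (induction N rule: dec_induct) (use mertens_potential_Suc_le in force)+
  then have "mertens_potential N \<le> 2 - ln (ln 2)" by (simp only: mertens_potential_2)
  moreover have "((\<Sum>p\<in>primes_le N. ln (real p) / real p) - ln 4) / ln (real N) \<le> 1"
    using sum_ln_prime_div_prime_le[of N] assms by (simp add: divide_le_eq)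
  ultimately show ?thesis unfolding mertens_potential_def by linarith
qed

lemma sum_inverse_mult_pred_le: "(\<Sum>k\<in>{2..N}. 1 / (real k * (real k - 1))) \<le> 1"
proof (cases "N \<ge> 1")
  case True
  have "(\<Sum>k\<in>{2..N}. 1 / (real k * (real k - 1)))
          = (\<Sum>k\<in>{Suc 1..N}. (- 1 / real k) - (- 1 / real (k - 1)))"
    by (intro sum.cong) (auto simp: of_nat_diff field_simps)
  also have "\<dots> = 1 - 1 / real N" using True by (subst sum_telescope'') simp_all
  finally show ?thesis by simp
qed simp

lemma ln_one_minus_inverse_ge:
  fixes x :: real
  assumes "x > 1"
  shows "ln (1 - 1/x) \<ge> - (1/x + 1 / (x * (x - 1)))"
proof -
  have "ln (x / (x - 1)) \<le> x / (x - 1) - 1" using assms by (intro ln_le_minus_one) simp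
  also have "\<dots> = 1/x + 1 / (x * (x - 1))" using assms by (simp add: field_simps)
  also have "ln (x / (x - 1)) = - ln (1 - 1/x)"
    using assms by (simp add: ln_div field_simps)
  finally show ?thesis by simp
qed

lemma prod_one_minus_inverse_primes_ge:
  assumes "N \<ge> 2"
  shows "(\<Prod>p\<in>primes_le N. 1 - 1 / real p) \<ge> ln 2 / (exp 4 * ln (real N))"
proof -
  have p: "real p > 1" if "p \<in> primes_le N" for p
    using that prime_gt_1_nat by (simp add: primes_le_def)
  have "ln (\<Prod>p\<in>primes_le N. 1 - 1 / real p) = (\<Sum>p\<in>primes_le N. ln (1 - 1 / real p))"
    using p by (intro ln_prod) (auto simp: field_simps)
  also have "\<dots> \<ge> - ((\<Sum>p\<in>primes_le N. 1 / real p) + (\<Sum>p\<in>primes_le N. 1 / (real p * (real p - 1))))"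
    using ln_one_minus_inverse_ge[OF p] by (simp add: sum.distrib[symmetric] sum_negf[symmetric] sum_mono)
  finally have "ln (\<Prod>p\<in>primes_le N. 1 - 1 / real p)
      \<ge> - ((\<Sum>p\<in>primes_le N. 1 / real p) + (\<Sum>p\<in>primes_le N. 1 / (real p * (real p - 1))))" .
  moreover have "(\<Sum>p\<in>primes_le N. 1 / (real p * (real p - 1)))
                   \<le> (\<Sum>k\<in>{2..N}. 1 / (real k * (real k - 1)))"
    by (rule sum_mono2) (auto simp: primes_le_def prime_ge_2_nat)
  ultimately have "ln (\<Prod>p\<in>primes_le N. 1 - 1 / real p) \<ge> ln (ln 2) - 4 - ln (ln (real N))"
    using sum_inverse_primes_le[OF assms] sum_inverse_mult_pred_le[of N] by linarith
  moreover have "(\<Prod>p\<in>primes_le N. 1 - 1 / real p) > 0"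
  proof (rule prod_pos)
    fix q assume "q \<in> primes_le N"
    from p[OF this] show "0 < 1 - 1 / real q" by (simp add: field_simps)
  qed
  moreover have "exp (ln (ln 2) - 4 - ln (ln (real N))) = ln 2 / (exp 4 * ln (real N))"
    using assms by (simp add: exp_diff)
  ultimately show ?thesis by (metis exp_le_cancel_iff exp_ln)
qed

lemma prime_factors_primorial: "prime_factors (primorial N) = primes_le N"
proof -
  have "prime_factors (primorial N) = (\<Union>p\<in>primes_le N. prime_factors p)"
    unfolding primorial_def by (subst prime_factors_prod) (auto simp: primes_le_def)
  also have "\<dots> = primes_le N" by (auto simp: primes_le_def prime_prime_factors)
  finally show ?thesis .
qed

lemma totient_primorial:
  "real (totient (primorial N)) = real (primorial N) * (\<Prod>p\<in>primes_le N. 1 - 1 / real p)"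
  using totient_formula2[of "primorial N"] by (simp only: prime_factors_primorial)

lemma prime_dvd_primorial: "prime p \<Longrightarrow> p \<le> N \<Longrightarrow> p dvd primorial N"
  unfolding primorial_def primes_le_def by (intro dvd_prodI) auto

section \<open>Units and covering sets\<close>

lemma covering_set_finite: "covering_set n l B \<Longrightarrow> finite B"
  unfolding covering_set_def by (auto intro: finite_subset[of _ "{0..<n}"])

lemma covering_set_residues:
  assumes "1 \<le> l"
  shows "covering_set n l {0..<n}"
proof -
  have "\<exists>a b. x = (a * b) mod n \<and> a \<le> l \<and> b \<in> {0..<n}" if "x < n" for x
    using that assms by (intro exI[of _ 1] exI[of _ x]) simp
  then show ?thesis unfolding covering_set_def by auto
qed

lemma fcov_attained:
  assumes "1 \<le> l"
  shows "\<exists>B. covering_set n l B \<and> card B = fcov n l"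
proof -
  have "\<exists>k B. covering_set n l B \<and> card B = k" using covering_set_residues[OF assms] by blast
  then show ?thesis unfolding fcov_def by (rule LeastI_ex)
qed

text \<open>If \<open>k = a b mod n\<close> is a unit then so is \<open>a\<close>; but \<open>a \<le> l\<close> has no prime factor
  outside those of \<open>n\<close>, so \<open>a = 1\<close> and \<open>k = b\<close>.\<close>
lemma coprime_mem_covering_set:
  assumes B: "covering_set n l B" and n: "2 \<le> n"
    and small_primes: "\<And>p. prime p \<Longrightarrow> p \<le> l \<Longrightarrow> p dvd n"
    and k: "k < n" "coprime k n"
  shows "k \<in> B"
proof -
  have "k \<in> {(a * b) mod n | a b. a \<le> l \<and> b \<in> B}"
    using B k(1) unfolding covering_set_def by simp
  then obtain a b where ab: "k = (a * b) mod n" "a \<le> l" "b \<in> B" by blast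
  have "coprime (a * b) n" using k(2) n ab(1) by simp
  then have "coprime a n" by simp
  have "a = 1"
  proof (rule ccontr)
    assume "a \<noteq> 1"
    then obtain p where p: "prime p" "p dvd a" using prime_factor_nat by blast
    have "a \<noteq> 0"
    proof
      assume "a = 0"
      with \<open>coprime a n\<close> have "n = 1" by simp
      with n show False by simp
    qed
    then have "p \<le> a" using p(2) by (simp add: dvd_imp_le)
    then have "p dvd n" using p(1) ab(2) small_primes by simp
    then have "is_unit p" by (rule coprime_common_divisor[OF \<open>coprime a n\<close> p(2)])
    with p(1) show False by (simp add: not_prime_unit)
  qed
  moreover have "b < n" using ab(3) B unfolding covering_set_def by auto
  ultimately show ?thesis using ab by simp
qed

lemma totient_le_fcov:
  assumes "2 \<le> n" "1 \<le> l" "\<And>p. prime p \<Longrightarrow> p \<le> l \<Longrightarrow> p dvd n"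
  shows "totient n \<le> fcov n l"
proof -
  obtain B where B: "covering_set n l B" "card B = fcov n l"
    using fcov_attained[OF assms(2)] by blast
  have "totatives n \<subseteq> B"
  proof
    fix k assume "k \<in> totatives n"
    then have "k \<le> n" "coprime k n" by (auto simp: totatives_def)
    moreover have "k \<noteq> n" using \<open>coprime k n\<close> assms(1) by auto
    ultimately show "k \<in> B" using coprime_mem_covering_set[OF B(1) assms(1,3)] by simp
  qed
  then show ?thesis
    unfolding totient_def B(2)[symmetric] by (intro card_mono covering_set_finite[OF B(1)])
qed

section \<open>The primorial pairs\<close>

lemma Log_ge_1: "Log x \<ge> 1"
  unfolding Log_def by simp

text \<open>Split at \<open>t = \<surd>T\<close>: above it \<open>Log t \<ge> ln T / 2\<close>, below it \<open>t \<le> \<surd>T \<le> 2T / ln T\<close>.\<close>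
lemma divide_Log_le:
  fixes t T :: real
  assumes "1 \<le> t" "t \<le> T" "1 < T"
  shows "t / Log t \<le> 2 * T / ln T"
proof (cases "sqrt T \<le> t")
  case True
  have "ln T / 2 = ln (sqrt T)" using assms by (simp add: ln_sqrt)
  also have "\<dots> \<le> ln t" using True assms by (intro ln_mono) auto
  also have "\<dots> \<le> Log t" unfolding Log_def by simp
  finally have "t / Log t \<le> t / (ln T / 2)"
    using assms Log_ge_1[of t] by (intro divide_left_mono) auto
  also have "\<dots> \<le> 2 * T / ln T" using assms by (simp add: divide_right_mono)
  finally show ?thesis .
next
  case False
  have "ln (sqrt T) \<le> sqrt T - 1" using assms by (intro ln_le_minus_one) simp
  then have "ln T \<le> 2 * sqrt T" using assms by (simp add: ln_sqrt)
  then have "sqrt T * ln T \<le> sqrt T * (2 * sqrt T)" using assms by (intro mult_left_mono) simp_all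
  also have "\<dots> = 2 * T" using assms by simp
  finally have "sqrt T * ln T \<le> 2 * T" .
  then have "sqrt T \<le> 2 * T / ln T" using assms by (simp add: field_simps)
  moreover have "t / Log t \<le> t" using assms Log_ge_1[of t] by (simp add: divide_le_eq)
  ultimately show ?thesis using False by linarith
qed

lemma Log_ratio_primorial_le:
  assumes "N \<ge> 3"
  shows "Log (real (primorial N)) / Log (Log (real (primorial N)))
           \<le> 2 * ln 4 * real N / ln (real N)"
proof -
  define T where "T = real N * ln 4"
  have "real N \<le> T"
    unfolding T_def using mult_left_mono[OF ln_4_ge_1, of "real N"] by simp
  then have "1 < T" "0 < ln (real N)" "ln (real N) \<le> ln T" using assms by simp_all
  have "ln (real (primorial N)) \<le> T"
    unfolding T_def ln_primorial by (rule sum_ln_primes_le)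
  then have "Log (real (primorial N)) \<le> T" unfolding Log_def using \<open>1 < T\<close> by simp
  then have "Log (real (primorial N)) / Log (Log (real (primorial N))) \<le> 2 * T / ln T"
    by (rule divide_Log_le[OF Log_ge_1 _ \<open>1 < T\<close>])
  also have "\<dots> \<le> 2 * T / ln (real N)"
    using \<open>1 < T\<close> \<open>0 < ln (real N)\<close> \<open>ln (real N) \<le> ln T\<close> by (intro divide_left_mono) auto
  finally show ?thesis unfolding T_def by (simp add: mult.commute mult.left_commute)
qed

lemma less_primorial:
  assumes "prime N" "3 \<le> N"
  shows "N < primorial N"
proof -
  have "\<Prod>{2, N} dvd primorial N"
    unfolding primorial_def using assms by (intro prod_dvd_prod_subset) (auto simp: primes_le_def)
  then have "2 * N \<le> primorial N" using assms primorial_pos by (simp add: dvd_imp_le)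
  then show ?thesis using assms by simp
qed

lemma fcov_primorial_ge:
  assumes "N \<ge> 3"
  shows "1 / (4 * exp 4) * (real (primorial N) / real N)
           * (Log (real (primorial N)) / Log (Log (real (primorial N))))
         \<le> real (fcov (primorial N) N)"
proof -
  have "2 \<le> primorial N"
    using prime_dvd_primorial[of 2 N] assms primorial_pos by (simp add: dvd_imp_le)
  have "1 / (4 * exp 4) * (real (primorial N) / real N)
           * (Log (real (primorial N)) / Log (Log (real (primorial N))))
        \<le> 1 / (4 * exp 4) * (real (primorial N) / real N) * (2 * ln 4 * real N / ln (real N))"
    using Log_ratio_primorial_le[OF assms] by (intro mult_left_mono) simp_all
  also have "\<dots> = real (primorial N) * (ln 2 / (exp 4 * ln (real N)))"
    using assms by (simp add: ln_4 field_simps)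
  also have "\<dots> \<le> real (primorial N) * (\<Prod>p\<in>primes_le N. 1 - 1 / real p)"
    using prod_one_minus_inverse_primes_ge[of N] assms by (intro mult_left_mono) simp_all
  also have "\<dots> = real (totient (primorial N))" by (rule totient_primorial[symmetric])
  also have "\<dots> \<le> real (fcov (primorial N) N)"
    using totient_le_fcov[OF \<open>2 \<le> primorial N\<close>] assms prime_dvd_primorial by simp
  finally show ?thesis .
qed

theorem mainTheorem12:
  shows "\<exists>c::real. c > 0 \<and>
    infinite {(n::nat, l::nat). 1 \<le> l \<and> l < n \<and>
      real (fcov n l) \<ge> c * (real n / real l) * (Log (real n) / Log (Log (real n)))}"
proof (intro exI conjI)
  let ?c = "1 / (4 * exp 4) :: real"
  let ?S = "{(n::nat, l::nat). 1 \<le> l \<and> l < n \<and>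
      real (fcov n l) \<ge> ?c * (real n / real l) * (Log (real n) / Log (Log (real n)))}"
  let ?P = "{N::nat. prime N \<and> 3 \<le> N}"
  show "?c > 0" by simp
  have "?P = {N. prime N} - {..2}" by auto
  have "(\<lambda>N. (primorial N, N)) ` ?P \<subseteq> ?S"
    using less_primorial fcov_primorial_ge by auto
  moreover have "infinite ((\<lambda>N. (primorial N, N)) ` ?P)"
    using primes_infinite \<open>?P = {N. prime N} - {..2}\<close> by (subst finite_image_iff) (auto simp: inj_on_def)
  ultimately show "infinite ?S" by (rule infinite_super)
qed

end
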